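(* Let $\Gamma(V,d,c)$ be a coherent cost-geometry with $|V|=n$, positive scale costs $c_k$ and coherence constants $\gamma,\alpha$, and let $\theta>0$. Define $$\Lambda_\theta=\max_{k_\theta\le k\le K}\left[\frac{\log p_k}{c_k}\left(1-\frac{\theta\log\log n}{\log p_k}\right)\right],\qquad B^-_\theta=g(\Lambda_\theta).$$ Then for $B\le B^-_\theta$, a random graph drawn from the product measure $G(n,\mathbf{Q}^*(B))$ has $O(n\log^{\theta+1}(n))$ edges with high probability.
   Context: Geometry $(V,d)$: finite $V$, $|V|=n$, $d$ symmetric, nonnegative, $d(x,y)=0$ iff $x=y$. For $\gamma>1$, $K=\lceil\log_\gamma n\rceil$, $P_k(v)=\#\{u: d(v,u)\in(\gamma^{k-1},\gamma^k]\}$; $(V,d)$ is $\gamma$-coherent if (H1) there are $A>1,\alpha>0$ with $\alpha\gamma^k\le P_k(v)\le A\gamma^k$ for all $v$, $k\in[K]$, and (H2) there are $\phi>0$, $0<\lambda<1$ with $|\{u: d(v,u)\le\gamma^{k_{vt}},\ d(u,t)\le\lambda d(v,t)\}|\ge\phi\gamma^{k_{vt}}$ for all $v\ne t$, where $d(v,t)\in(\gamma^{k_{vt}-1},\gamma^{k_{vt}}]$. A coherent cost-geometry additionally has a cost $c_k>0$ on every pair at distance in $(\gamma^{k-1},\gamma^k]$. Notation: $P_k=\frac12\sum_vP_k(v)$, $p_k=P_k/n$; $g(\lambda)=\sum_{k=1}^Kc_kp_k/(1+e^{\lambda c_k})$ for $\lambda\ge0$; $\bar B=g(0)$; $\lambda(B)=g^{-1}(B)$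 for $0<B\le\bar B$, $\lambda(B)=0$ for $B\ge\bar B$; $\mathbf{Q}^*(B)$ has entry $1/(1+\exp(\lambda(B)c_k))$ for every pair of scale $k$; $G(n,\mathbf{Q})$ includes each pair $\{i,j\}$ independently with probability $Q_{ij}$. $k_\theta=\frac{\theta\log\log n-\log\alpha}{\log\gamma}$. "With high probability" means probability $\to1$ as $n\to\infty$. *)

theory Defs
  imports "HOL-Probability.Probability"
begin

(* Vertex set V = {..<n}; d :: nat => nat => real the dissimilarity; gam = gamma. *)

definition semimetric :: "nat \<Rightarrow> (nat \<Rightarrow> nat \<Rightarrow> real) \<Rightarrow> bool" where
  "semimetric n d \<longleftrightarrow> (\<forall>x<n. \<forall>y<n. d x y = d y x \<and> 0 \<le> d x y \<and> (d x y = 0 \<longleftrightarrow> x = y))"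

definition Kmax :: "real \<Rightarrow> nat \<Rightarrow> nat" where
  "Kmax gam n = nat \<lceil>log gam (real n)\<rceil>"

(* the integer scale k with x in (gam^(k-1), gam^k], for x > 0 *)
definition scale :: "real \<Rightarrow> real \<Rightarrow> int" where
  "scale gam x = \<lceil>log gam x\<rceil>"

definition Pkv :: "real \<Rightarrow> nat \<Rightarrow> (nat \<Rightarrow> nat \<Rightarrow> real) \<Rightarrow> nat \<Rightarrow> nat \<Rightarrow> nat" where
  "Pkv gam n d k v = card {u. u < n \<and> gam ^ (k - 1) < d v u \<and> d v u \<le> gam ^ k}"

definition Pk :: "real \<Rightarrow> nat \<Rightarrow> (nat \<Rightarrow> nat \<Rightarrow> real) \<Rightarrow> nat \<Rightarrow> real" where
  "Pk gam n d k = (1/2) * (\<Sum>v<n. real (Pkv gam n d k v))"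

definition pk :: "real \<Rightarrow> nat \<Rightarrow> (nat \<Rightarrow> nat \<Rightarrow> real) \<Rightarrow> nat \<Rightarrow> real" where
  "pk gam n d k = Pk gam n d k / real n"

definition coherent :: "real \<Rightarrow> real \<Rightarrow> real \<Rightarrow> real \<Rightarrow> real \<Rightarrow> nat \<Rightarrow> (nat \<Rightarrow> nat \<Rightarrow> real) \<Rightarrow> bool" where
  "coherent gam alpha A phi lam n d \<longleftrightarrow>
     gam > 1 \<and> A > 1 \<and> alpha > 0 \<and> phi > 0 \<and> 0 < lam \<and> lam < 1 \<and>
     (\<forall>v<n. \<forall>k\<in>{1..Kmax gam n}.
        alpha * gam ^ k \<le> real (Pkv gam n d k v) \<and> real (Pkv gam n d k v) \<le> A * gam ^ k) \<and>
     (\<forall>v<n. \<forall>t<n. v \<noteq> t \<longrightarrow>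
        real (card {u. u < n \<and> d v u \<le> gam powr (of_int (scale gam (d v t)))
                            \<and> d u t \<le> lam * d v t})
          \<ge> phi * gam powr (of_int (scale gam (d v t))))"

definition coherent_cost_geometry ::
  "real \<Rightarrow> real \<Rightarrow> real \<Rightarrow> real \<Rightarrow> real \<Rightarrow> nat \<Rightarrow> (nat \<Rightarrow> nat \<Rightarrow> real) \<Rightarrow> (nat \<Rightarrow> real) \<Rightarrow> bool" where
  "coherent_cost_geometry gam alpha A phi lam n d c \<longleftrightarrow>
     semimetric n d \<and> coherent gam alpha A phi lam n d \<and>
     (\<forall>x<n. \<forall>y<n. x \<noteq> y \<longrightarrow> 1 \<le> scale gam (d x y) \<and> scale gam (d x y) \<le> int (Kmax gam n)) \<and>
     (\<forall>k\<in>{1..Kmax gam n}. c k > 0)"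

definition gfun :: "real \<Rightarrow> nat \<Rightarrow> (nat \<Rightarrow> nat \<Rightarrow> real) \<Rightarrow> (nat \<Rightarrow> real) \<Rightarrow> real \<Rightarrow> real" where
  "gfun gam n d c l = (\<Sum>k=1..Kmax gam n. c k * pk gam n d k / (1 + exp (l * c k)))"

definition Bbar :: "real \<Rightarrow> nat \<Rightarrow> (nat \<Rightarrow> nat \<Rightarrow> real) \<Rightarrow> (nat \<Rightarrow> real) \<Rightarrow> real" where
  "Bbar gam n d c = gfun gam n d c 0"

definition lam_of :: "real \<Rightarrow> nat \<Rightarrow> (nat \<Rightarrow> nat \<Rightarrow> real) \<Rightarrow> (nat \<Rightarrow> real) \<Rightarrow> real \<Rightarrow> real" where
  "lam_of gam n d c B =
     (if 0 < B \<and> B \<le> Bbar gam n d c then (THE l. 0 \<le> l \<and> gfun gam n d c l = B) else 0)"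

definition Qstar :: "real \<Rightarrow> nat \<Rightarrow> (nat \<Rightarrow> nat \<Rightarrow> real) \<Rightarrow> (nat \<Rightarrow> real) \<Rightarrow> real \<Rightarrow> nat \<times> nat \<Rightarrow> real" where
  "Qstar gam n d c B = (\<lambda>(i, j). 1 / (1 + exp (lam_of gam n d c B * c (nat (scale gam (d i j))))))"

(* unordered pairs {i,j} of V = {..<n}, represented as (i,j) with i < j *)
definition pairs :: "nat \<Rightarrow> (nat \<times> nat) set" where
  "pairs n = {(i, j). i < j \<and> j < n}"

(* G(n,Q): each pair included independently with probability Q; a graph is its edge indicator *)
definition random_graph :: "nat \<Rightarrow> (nat \<times> nat \<Rightarrow> real) \<Rightarrow> (nat \<times> nat \<Rightarrow> bool) pmf" where
  "random_graph n Q = Pi_pmf (pairs n) False (\<lambda>e. bernoulli_pmf (Q e))"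

definition num_edges :: "nat \<Rightarrow> (nat \<times> nat \<Rightarrow> bool) \<Rightarrow> nat" where
  "num_edges n X = card {e \<in> pairs n. X e}"

definition k_theta :: "real \<Rightarrow> real \<Rightarrow> real \<Rightarrow> nat \<Rightarrow> real" where
  "k_theta gam alpha theta n = (theta * ln (ln (real n)) - ln alpha) / ln gam"

definition Lambda_theta :: "real \<Rightarrow> real \<Rightarrow> real \<Rightarrow> nat \<Rightarrow> (nat \<Rightarrow> nat \<Rightarrow> real) \<Rightarrow> (nat \<Rightarrow> real) \<Rightarrow> real" where
  "Lambda_theta gam alpha theta n d c =
     Max {(ln (pk gam n d k) / c k) * (1 - theta * ln (ln (real n)) / ln (pk gam n d k)) | k.
            k \<in> {1..Kmax gam n} \<and> k_theta gam alpha theta n \<le> real k}"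

definition B_minus :: "real \<Rightarrow> real \<Rightarrow> real \<Rightarrow> nat \<Rightarrow> (nat \<Rightarrow> nat \<Rightarrow> real) \<Rightarrow> (nat \<Rightarrow> real) \<Rightarrow> real" where
  "B_minus gam alpha theta n d c = gfun gam n d c (Lambda_theta gam alpha theta n d c)"

end

theory Submission
  imports Defs "HOL-Real_Asymp.Real_Asymp"
begin

text \<open>
  The expected number of edges of \<open>G(n, Q*(B))\<close> is at most \<open>2n \<Sum>k. p_k / (1 + exp (\<lambda> c_k))\<close>
  with \<open>\<lambda> = \<lambda>(B)\<close>. As \<open>g\<close> is strictly decreasing, \<open>B \<le> g(\<Lambda>_\<theta>)\<close> forces \<open>\<lambda> \<ge> \<Lambda>_\<theta>\<close>, so each
  scale \<open>k \<ge> k_\<theta>\<close> contributes \<open>p_k exp (-\<lambda> c_k) \<le> log^\<theta> n\<close>, while below \<open>k_\<theta>\<close> coherence alone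
  gives \<open>p_k \<le> A \<gamma>^k / 2 \<le> (A / \<alpha>) log^\<theta> n\<close>. With \<open>K = O(log n)\<close> scales the expectation is
  \<open>O(n log^(\<theta>+1) n)\<close>, and Hoeffding's inequality for the independent edge indicators bounds
  the probability of exceeding it by another \<open>C n log^(\<theta>+1) n\<close> by \<open>exp (-2 C^2 log^2 n)\<close>.
\<close>

lemma scale_eq_iff:
  assumes "gam > 1" and "x > 0" and "k \<ge> 1"
  shows "scale gam x = int k \<longleftrightarrow> gam ^ (k - 1) < x \<and> x \<le> gam ^ k"
proof -
  have k_minus_1: "real_of_int (int k) - 1 = real (k - 1)" using \<open>k \<ge> 1\<close> by simp
  have "scale gam x = int k \<longleftrightarrow> real (k - 1) < log gam x \<and> log gam x \<le> real k"
    unfolding scale_def ceiling_eq_iff k_minus_1 by simp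
  also have "\<dots> \<longleftrightarrow> gam powr real (k - 1) < x \<and> x \<le> gam powr real k"
    using assms by (simp add: less_log_iff log_le_iff)
  also have "\<dots> \<longleftrightarrow> gam ^ (k - 1) < x \<and> x \<le> gam ^ k"
    using \<open>gam > 1\<close> by (simp add: powr_realpow)
  finally show ?thesis .
qed

lemma Kmax_le:
  assumes "gam > 1" and "gam \<le> real n"
  shows "real (Kmax gam n) \<le> 2 * ln (real n) / ln gam"
proof -
  have log_eq: "log gam (real n) = ln (real n) / ln gam" by (simp add: log_def)
  have "log gam (real n) \<ge> 1"
    using assms by (simp add: log_eq le_divide_eq)
  then have "real (Kmax gam n) = of_int \<lceil>log gam (real n)\<rceil>" by (simp add: Kmax_def)
  also have "\<dots> \<le> log gam (real n) + 1" by linarith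
  also have "\<dots> \<le> 2 * ln (real n) / ln gam" using \<open>log gam (real n) \<ge> 1\<close> log_eq by simp
  finally show ?thesis .
qed

lemma logistic_le_exp_neg: "1 / (1 + exp x) \<le> exp (- x :: real)"
proof -
  have "1 / (1 + exp x) \<le> 1 / exp x"
    by (intro divide_left_mono) (auto intro!: mult_pos_pos add_pos_pos)
  then show ?thesis by (simp add: exp_minus inverse_eq_divide)
qed

lemma logistic_le_1: "1 / (1 + exp x) \<le> (1 :: real)"
  by (simp add: add_pos_pos)

lemma Qstar_bounds: "0 \<le> Qstar gam n d c B e \<and> Qstar gam n d c B e \<le> 1"
  by (cases e) (simp add: Qstar_def logistic_le_1 add_pos_pos less_imp_le)

lemma finite_pairs: "finite (pairs n)"
  by (rule finite_subset[of _ "{..<n} \<times> {..<n}"]) (auto simp: pairs_def)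

lemma card_pairs_le: "card (pairs n) \<le> n * n"
proof -
  have "card (pairs n) \<le> card ({..<n} \<times> {..<n})"
    by (rule card_mono) (auto simp: pairs_def)
  then show ?thesis by simp
qed

lemma Pi_pmf_bernoulli_count_tail:
  fixes Q :: "'a \<Rightarrow> real"
  assumes fin: "finite I" and ne: "I \<noteq> {}"
    and Q: "\<And>e. e \<in> I \<Longrightarrow> 0 \<le> Q e \<and> Q e \<le> 1" and eps: "eps \<ge> 0"
  shows "measure_pmf.prob (Pi_pmf I False (\<lambda>e. bernoulli_pmf (Q e)))
           {f. (\<Sum>e\<in>I. Q e) + eps \<le> real (card {e\<in>I. f e})} \<le> exp (- 2 * eps\<^sup>2 / real (card I))"
proof -
  define P where "P = Pi_pmf I False (\<lambda>e. bernoulli_pmf (Q e))"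
  define X where "X = (\<lambda>(e :: 'a) (f :: 'a \<Rightarrow> bool). if f e then 1 else 0 :: real)"
  have expectation: "measure_pmf.expectation P (X e) = Q e" if "e \<in> I" for e
  proof -
    have "measure_pmf.expectation P (X e)
        = measure_pmf.expectation (map_pmf (\<lambda>f. f e) P) (\<lambda>b. if b then 1 else 0 :: real)"
      by (simp add: X_def)
    also have "map_pmf (\<lambda>f. f e) P = bernoulli_pmf (Q e)"
      using that fin by (simp add: P_def Pi_pmf_component)
    finally show ?thesis using Q[OF that] by simp
  qed
  interpret Hoeffding_ineq "measure_pmf P" I X "\<lambda>_. 0" "\<lambda>_. 1"
    "\<Sum>e\<in>I. measure_pmf.expectation P (X e)"
  proof unfold_locales
    show "prob_space.indep_vars (measure_pmf P) (\<lambda>_. borel) X I"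
      unfolding P_def X_def
      by (intro prob_space.indep_vars_compose2[OF _ indep_vars_Pi_pmf])
         (auto simp: measure_pmf.prob_space_axioms fin)
  qed (auto simp: fin X_def)
  have mean: "(\<Sum>e\<in>I. measure_pmf.expectation P (X e)) = (\<Sum>e\<in>I. Q e)"
    using expectation by simp
  have count: "(\<Sum>e\<in>I. X e f) = real (card {e\<in>I. f e})" for f
  proof -
    have "(\<Sum>e\<in>I. X e f) = (\<Sum>e\<in>{e\<in>I. f e}. 1)"
      using fin by (intro sum.mono_neutral_cong_right) (auto simp: X_def)
    then show ?thesis by simp
  qed
  have "0 < (\<Sum>e\<in>I. (1 - 0 :: real)\<^sup>2)" using fin ne by (simp add: card_gt_0_iff)
  from Hoeffding_ineq_ge[OF eps this]
  have "measure_pmf.prob P {f. (\<Sum>e\<in>I. measure_pmf.expectation P (X e)) + eps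
      \<le> real (card {e\<in>I. f e})} \<le> exp (- 2 * eps\<^sup>2 / real (card I))"
    by (simp add: count)
  then show ?thesis by (subst (asm) mean) (simp add: P_def)
qed

lemma random_graph_num_edges_le:
  assumes "2 \<le> n" and "\<And>e. 0 \<le> Q e \<and> Q e \<le> 1" and "b \<ge> 0"
  shows "1 - exp (- 2 * b\<^sup>2 / (real n * real n))
    \<le> measure_pmf.prob (random_graph n Q) {X. real (num_edges n X) \<le> (\<Sum>e\<in>pairs n. Q e) + b}"
proof -
  let ?tail = "{X. (\<Sum>e\<in>pairs n. Q e) + b \<le> real (card {e\<in>pairs n. X e})}"
  have "(0, 1) \<in> pairs n" using assms(1) by (simp add: pairs_def)
  then have ne: "pairs n \<noteq> {}" by blast
  then have card_pos: "0 < real (card (pairs n))"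
    using finite_pairs by (auto simp: card_gt_0_iff)
  have "exp (- 2 * b\<^sup>2 / real (card (pairs n))) \<le> exp (- 2 * b\<^sup>2 / (real n * real n))"
    using card_pos card_pairs_le[of n]
    by (simp add: frac_le of_nat_mono[of "card (pairs n)" "n * n", simplified])
  then have "measure_pmf.prob (random_graph n Q) ?tail \<le> exp (- 2 * b\<^sup>2 / (real n * real n))"
    using Pi_pmf_bernoulli_count_tail[OF finite_pairs ne _ \<open>b \<ge> 0\<close>, of Q] assms(2)
    unfolding random_graph_def by (meson order_trans)
  moreover have "measure_pmf.prob (random_graph n Q) (UNIV - ?tail)
      \<le> measure_pmf.prob (random_graph n Q) {X. real (num_edges n X) \<le> (\<Sum>e\<in>pairs n. Q e) + b}"
    by (rule measure_pmf.finite_measure_mono) (auto simp: num_edges_def)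
  ultimately show ?thesis
    using measure_pmf.prob_compl[of ?tail "random_graph n Q"] by simp
qed

definition edge_constant :: "real \<Rightarrow> real \<Rightarrow> real \<Rightarrow> real" where
  "edge_constant gam alpha A = 4 * (1 + A / alpha) / ln gam"

locale large_cost_geometry =
  fixes gam alpha A phi lam :: real and n :: nat
    and d :: "nat \<Rightarrow> nat \<Rightarrow> real" and c :: "nat \<Rightarrow> real"
  assumes ccg: "coherent_cost_geometry gam alpha A phi lam n d c"
    and n_ge_3: "3 \<le> n" and gam_le_n: "gam \<le> real n"
begin

lemma gam_gt_1: "gam > 1" and A_gt_1: "A > 1" and alpha_pos: "alpha > 0"
  and Pkv_bounds: "v < n \<Longrightarrow> k \<in> {1..Kmax gam n} \<Longrightarrow>
      alpha * gam ^ k \<le> real (Pkv gam n d k v) \<and> real (Pkv gam n d k v) \<le> A * gam ^ k"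
  and d_self: "v < n \<Longrightarrow> d v v = 0"
  and d_pos: "u < n \<Longrightarrow> v < n \<Longrightarrow> u \<noteq> v \<Longrightarrow> d u v > 0"
  and scale_range: "u < n \<Longrightarrow> v < n \<Longrightarrow> u \<noteq> v \<Longrightarrow>
      1 \<le> scale gam (d u v) \<and> scale gam (d u v) \<le> int (Kmax gam n)"
  and cost_pos: "k \<in> {1..Kmax gam n} \<Longrightarrow> c k > 0"
  using ccg unfolding coherent_cost_geometry_def coherent_def semimetric_def
  by (metis order.not_eq_order_implies_strict)+

lemma ln_n_ge_1: "ln (real n) \<ge> 1"
proof -
  have "exp 1 \<le> real n" using exp_le n_ge_3 by linarith
  then show ?thesis using n_ge_3 by (simp add: ln_ge_iff)
qed

lemma Kmax_ge_1: "Kmax gam n \<ge> 1"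
proof -
  have "log gam (real n) > 0" using gam_gt_1 n_ge_3 by simp
  then show ?thesis unfolding Kmax_def by linarith
qed

lemma sum_scale_eq:
  assumes "v < n"
  shows "(\<Sum>u\<in>{..<n}-{v}. F (nat (scale gam (d v u))))
       = (\<Sum>k=1..Kmax gam n. real (Pkv gam n d k v) * F k)"
proof -
  define S where "S = {..<n} - {v}"
  define s where "s = (\<lambda>u. nat (scale gam (d v u)))"
  have "s ` S \<subseteq> {1..Kmax gam n}"
    using scale_range[OF \<open>v < n\<close>] by (fastforce simp: S_def s_def)
  then have "(\<Sum>u\<in>S. F (s u)) = (\<Sum>k=1..Kmax gam n. \<Sum>u\<in>{u\<in>S. s u = k}. F (s u))"
    by (intro sum.group[symmetric]) (auto simp: S_def)
  also have "\<dots> = (\<Sum>k=1..Kmax gam n. real (Pkv gam n d k v) * F k)"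
  proof (rule sum.cong[OF refl])
    fix k assume k: "k \<in> {1..Kmax gam n}"
    have "{u\<in>S. s u = k} = {u. u < n \<and> gam ^ (k - 1) < d v u \<and> d v u \<le> gam ^ k}"
    proof (intro set_eqI iffI)
      fix u assume "u \<in> {u\<in>S. s u = k}"
      moreover from this have "scale gam (d v u) = int k"
        using scale_range[OF \<open>v < n\<close>, of u] by (auto simp: S_def s_def)
      ultimately show "u \<in> {u. u < n \<and> gam ^ (k - 1) < d v u \<and> d v u \<le> gam ^ k}"
        using scale_eq_iff[OF gam_gt_1 d_pos[OF \<open>v < n\<close>]] k by (auto simp: S_def)
    next
      fix u assume u: "u \<in> {u. u < n \<and> gam ^ (k - 1) < d v u \<and> d v u \<le> gam ^ k}"
      then have "v \<noteq> u" using d_self[OF \<open>v < n\<close>] gam_gt_1 by auto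
      then have "scale gam (d v u) = int k"
        using scale_eq_iff[OF gam_gt_1 d_pos[OF \<open>v < n\<close> _ \<open>v \<noteq> u\<close>]] u k by auto
      with u \<open>v \<noteq> u\<close> show "u \<in> {u\<in>S. s u = k}" by (auto simp: S_def s_def)
    qed
    moreover have "(\<Sum>u\<in>{u\<in>S. s u = k}. F (s u)) = (\<Sum>u\<in>{u\<in>S. s u = k}. F k)"
      by simp
    ultimately show "(\<Sum>u\<in>{u\<in>S. s u = k}. F (s u)) = real (Pkv gam n d k v) * F k"
      by (simp add: Pkv_def)
  qed
  finally show ?thesis by (simp add: S_def s_def)
qed

lemma pk_bounds:
  assumes "k \<in> {1..Kmax gam n}"
  shows "alpha * gam ^ k / 2 \<le> pk gam n d k" and "pk gam n d k \<le> A * gam ^ k / 2"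
proof -
  have pk_eq: "pk gam n d k = (\<Sum>v<n. real (Pkv gam n d k v)) / (2 * real n)"
    by (simp add: pk_def Pk_def)
  have "real n * (alpha * gam ^ k) \<le> (\<Sum>v<n. real (Pkv gam n d k v))"
    using sum_bounded_below[of "{..<n}" "alpha * gam ^ k"] Pkv_bounds[OF _ assms] by auto
  then show "alpha * gam ^ k / 2 \<le> pk gam n d k"
    unfolding pk_eq using n_ge_3 by (simp add: field_simps)
  have "(\<Sum>v<n. real (Pkv gam n d k v)) \<le> real n * (A * gam ^ k)"
    using sum_bounded_above[of "{..<n}" _ "A * gam ^ k"] Pkv_bounds[OF _ assms] by auto
  then show "pk gam n d k \<le> A * gam ^ k / 2"
    unfolding pk_eq using n_ge_3 by (simp add: field_simps)
qed

lemma pk_pos: "k \<in> {1..Kmax gam n} \<Longrightarrow> pk gam n d k > 0"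
  using pk_bounds(1)[of k] gam_gt_1 alpha_pos
  by (smt (verit, best) divide_pos_pos mult_pos_pos zero_less_power)

lemma sum_Qstar_pairs_le_scale_sum:
  "(\<Sum>e\<in>pairs n. Qstar gam n d c B e)
     \<le> 2 * real n * (\<Sum>k=1..Kmax gam n. pk gam n d k * (1 / (1 + exp (lam_of gam n d c B * c k))))"
proof -
  define q where "q = (\<lambda>k. 1 / (1 + exp (lam_of gam n d c B * c k)))"
  have Q_eq: "Qstar gam n d c B = (\<lambda>(i, j). q (nat (scale gam (d i j))))"
    by (simp add: Qstar_def q_def fun_eq_iff)
  define S where "S = Sigma {..<n} (\<lambda>i. {..<n} - {i})"
  have "(\<Sum>e\<in>pairs n. Qstar gam n d c B e) \<le> (\<Sum>e\<in>S. Qstar gam n d c B e)"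
    by (rule sum_mono2) (auto simp: S_def pairs_def Qstar_bounds)
  also have "\<dots> = (\<Sum>i<n. \<Sum>j\<in>{..<n}-{i}. q (nat (scale gam (d i j))))"
    unfolding S_def Q_eq by (simp add: sum.Sigma)
  also have "\<dots> = (\<Sum>i<n. \<Sum>k=1..Kmax gam n. real (Pkv gam n d k i) * q k)"
    by (intro sum.cong refl sum_scale_eq) simp
  also have "\<dots> = (\<Sum>k=1..Kmax gam n. (\<Sum>i<n. real (Pkv gam n d k i)) * q k)"
    by (subst sum.swap) (simp add: sum_distrib_right)
  also have "\<dots> = (\<Sum>k=1..Kmax gam n. 2 * real n * (pk gam n d k * q k))"
    using n_ge_3 by (intro sum.cong refl) (simp add: pk_def Pk_def)
  also have "\<dots> = 2 * real n * (\<Sum>k=1..Kmax gam n. pk gam n d k * q k)"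
    by (simp add: sum_distrib_left)
  finally show ?thesis by (simp add: q_def)
qed

lemma gfun_strict_antimono:
  assumes "l1 < l2"
  shows "gfun gam n d c l2 < gfun gam n d c l1"
  unfolding gfun_def
proof (rule sum_strict_mono_ex1)
  have less: "c k * pk gam n d k / (1 + exp (l2 * c k)) < c k * pk gam n d k / (1 + exp (l1 * c k))"
    if k: "k \<in> {1..Kmax gam n}" for k
  proof -
    have "exp (l1 * c k) < exp (l2 * c k)" using assms cost_pos[OF k] by simp
    moreover have "c k * pk gam n d k > 0" using cost_pos[OF k] pk_pos[OF k] by simp
    ultimately show ?thesis
      by (intro divide_strict_left_mono) (auto simp: add_pos_pos)
  qed
  then show "\<forall>k\<in>{1..Kmax gam n}. c k * pk gam n d k / (1 + exp (l2 * c k))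
      \<le> c k * pk gam n d k / (1 + exp (l1 * c k))"
    by (auto intro: less_imp_le)
  show "\<exists>k\<in>{1..Kmax gam n}. c k * pk gam n d k / (1 + exp (l2 * c k))
      < c k * pk gam n d k / (1 + exp (l1 * c k))"
    using less Kmax_ge_1 by auto
qed simp

lemma continuous_on_gfun: "continuous_on S (gfun gam n d c)"
  unfolding gfun_def
  by (intro continuous_intros) (auto simp: add_pos_pos intro!: order.strict_implies_not_eq[symmetric])

lemma gfun_le_sum_pk_div:
  assumes "l > 0"
  shows "gfun gam n d c l \<le> (\<Sum>k=1..Kmax gam n. pk gam n d k) / l"
  unfolding gfun_def sum_divide_distrib
proof (rule sum_mono)
  fix k assume k: "k \<in> {1..Kmax gam n}"
  have "l * c k < 1 + exp (l * c k)" using exp_ge_add_one_self[of "l * c k"] by linarith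
  then have "c k * pk gam n d k / (1 + exp (l * c k)) \<le> c k * pk gam n d k / (l * c k)"
    using cost_pos[OF k] pk_pos[OF k] assms
    by (intro divide_left_mono) (auto intro!: less_imp_le mult_pos_pos add_pos_pos)
  then show "c k * pk gam n d k / (1 + exp (l * c k)) \<le> pk gam n d k / l"
    using cost_pos[OF k] by simp
qed

lemma gfun_lam_of:
  assumes "0 < B" and "B \<le> Bbar gam n d c"
  shows "gfun gam n d c (lam_of gam n d c B) = B"
proof -
  define S where "S = (\<Sum>k=1..Kmax gam n. pk gam n d k)"
  have "S \<ge> 0" unfolding S_def using pk_pos by (intro sum_nonneg) (auto intro: less_imp_le)
  define M where "M = S / B + 1"
  have "M > 0" unfolding M_def using \<open>S \<ge> 0\<close> \<open>0 < B\<close> by (simp add: add_nonneg_pos)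
  have "gfun gam n d c M \<le> S / M" using gfun_le_sum_pk_div[OF \<open>M > 0\<close>] by (simp add: S_def)
  also have "S / M < B" using \<open>M > 0\<close> \<open>0 < B\<close> \<open>S \<ge> 0\<close> by (simp add: M_def field_simps)
  finally have "gfun gam n d c M \<le> B" by simp
  then have "\<exists>l\<ge>0. l \<le> M \<and> gfun gam n d c l = B"
    by (intro IVT2') (use assms \<open>M > 0\<close> continuous_on_gfun in \<open>auto simp: Bbar_def\<close>)
  then obtain l where l: "0 \<le> l" "gfun gam n d c l = B" by blast
  have "\<exists>!l. 0 \<le> l \<and> gfun gam n d c l = B"
  proof (rule ex1I[of _ l])
    fix l' assume "0 \<le> l' \<and> gfun gam n d c l' = B"
    then show "l' = l"
      using l gfun_strict_antimono[of l l'] gfun_strict_antimono[of l' l] by (metis less_irrefl linorder_neqE_linordered_idom)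
  qed (use l in simp)
  then show ?thesis
    unfolding lam_of_def using assms theI'[of "\<lambda>l. 0 \<le> l \<and> gfun gam n d c l = B"] by simp
qed

lemma le_lam_of:
  assumes "0 < B" and "B \<le> gfun gam n d c L"
  shows "L \<le> lam_of gam n d c B"
proof (cases "B \<le> Bbar gam n d c")
  case True
  show ?thesis
  proof (rule ccontr)
    assume "\<not> L \<le> lam_of gam n d c B"
    then have "gfun gam n d c L < gfun gam n d c (lam_of gam n d c B)"
      by (simp add: gfun_strict_antimono)
    then show False using assms gfun_lam_of[OF \<open>0 < B\<close> True] by simp
  qed
next
  case False
  have "L < 0"
  proof (rule ccontr)
    assume "\<not> L < 0"
    then have "gfun gam n d c L \<le> Bbar gam n d c"
      unfolding Bbar_def using gfun_strict_antimono[of 0 L] by (cases "L = 0") auto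
    then show False using False assms by simp
  qed
  with False show ?thesis by (simp add: lam_of_def)
qed

lemma pk_le_below_k_theta:
  assumes k: "k \<in> {1..Kmax gam n}" and "real k < k_theta gam alpha theta n"
  shows "pk gam n d k \<le> A / alpha * ln (real n) powr theta"
proof -
  have "real k * ln gam < theta * ln (ln (real n)) - ln alpha"
    using assms(2) gam_gt_1 by (simp add: k_theta_def pos_less_divide_eq)
  then have "exp (ln alpha + real k * ln gam) < exp (theta * ln (ln (real n)))" by simp
  then have "alpha * gam ^ k < ln (real n) powr theta"
    using alpha_pos gam_gt_1 ln_n_ge_1
    by (simp add: exp_add exp_of_nat_mult powr_def mult.commute)
  moreover have "0 < alpha * gam ^ k" using alpha_pos gam_gt_1 by simp
  ultimately have "alpha * gam ^ k / 2 \<le> ln (real n) powr theta" by linarith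
  then have "A / alpha * (alpha * gam ^ k / 2) \<le> A / alpha * ln (real n) powr theta"
    using A_gt_1 alpha_pos by (intro mult_left_mono) auto
  moreover have "A / alpha * (alpha * gam ^ k / 2) = A * gam ^ k / 2" using alpha_pos by simp
  ultimately show ?thesis using pk_bounds(2)[OF k] by linarith
qed

lemma pk_exp_le_above_k_theta:
  assumes k: "k \<in> {1..Kmax gam n}" and "k_theta gam alpha theta n \<le> real k"
    and "Lambda_theta gam alpha theta n d c \<le> l" and "0 \<le> theta"
  shows "pk gam n d k * exp (- (l * c k)) \<le> ln (real n) powr theta"
proof -
  define p where "p = pk gam n d k"
  define L where "L = ln (ln (real n))"
  have "p > 0" using pk_pos[OF k] by (simp add: p_def)
  have "L \<ge> 0" using ln_n_ge_1 by (simp add: L_def)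
  have "c k > 0" using cost_pos[OF k] .
  \<comment> \<open>not an equality: for \<open>ln p = 0\<close> the right-hand side is \<open>0\<close>, as \<open>x / 0 = 0\<close>\<close>
  have "(ln p - theta * L) / c k \<le> (ln p / c k) * (1 - theta * L / ln p)"
    using \<open>c k > 0\<close> \<open>L \<ge> 0\<close> \<open>0 \<le> theta\<close>
    by (cases "ln p = 0") (simp_all add: field_simps)
  also have "\<dots> \<le> Lambda_theta gam alpha theta n d c"
    unfolding Lambda_theta_def p_def L_def
  proof (rule Max_ge)
    have "{ln (pk gam n d k) / c k * (1 - theta * ln (ln (real n)) / ln (pk gam n d k)) | k.
        k \<in> {1..Kmax gam n} \<and> k_theta gam alpha theta n \<le> real k}
      \<subseteq> (\<lambda>k. ln (pk gam n d k) / c k * (1 - theta * ln (ln (real n)) / ln (pk gam n d k)))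
          ` {1..Kmax gam n}"
      by auto
    then show "finite {ln (pk gam n d k) / c k * (1 - theta * ln (ln (real n)) / ln (pk gam n d k)) | k.
        k \<in> {1..Kmax gam n} \<and> k_theta gam alpha theta n \<le> real k}"
      by (rule finite_subset) simp
  qed (use k assms(2) in auto)
  finally have "(ln p - theta * L) / c k \<le> l" using assms(3) by linarith
  then have "ln p - l * c k \<le> theta * L"
    using \<open>c k > 0\<close> by (simp add: pos_divide_le_eq algebra_simps)
  then have "exp (ln p - l * c k) \<le> exp (theta * L)" by simp
  then show ?thesis
    using \<open>p > 0\<close> ln_n_ge_1
    by (simp add: p_def L_def exp_diff exp_minus powr_def mult.commute divide_inverse)
qed

lemma pk_logistic_le:
  assumes "0 \<le> theta" and "0 < B" and "B \<le> B_minus gam alpha theta n d c"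
    and k: "k \<in> {1..Kmax gam n}"
  shows "pk gam n d k * (1 / (1 + exp (lam_of gam n d c B * c k)))
    \<le> (1 + A / alpha) * ln (real n) powr theta"
proof -
  define l where "l = lam_of gam n d c B"
  define T where "T = ln (real n) powr theta"
  have "T \<ge> 1" using ln_n_ge_1 \<open>0 \<le> theta\<close> by (simp add: T_def ge_one_powr_ge_zero)
  have "0 \<le> A / alpha * T" using A_gt_1 alpha_pos \<open>T \<ge> 1\<close> by simp
  then have T_le: "T \<le> (1 + A / alpha) * T" and AT_le: "A / alpha * T \<le> (1 + A / alpha) * T"
    using \<open>T \<ge> 1\<close> by (simp_all add: algebra_simps)
  have "pk gam n d k * (1 / (1 + exp (l * c k))) \<le> (1 + A / alpha) * T"
  proof (cases "k_theta gam alpha theta n \<le> real k")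
    case True
    have "Lambda_theta gam alpha theta n d c \<le> l"
      using le_lam_of assms(2,3) by (simp add: l_def B_minus_def)
    then have "pk gam n d k * exp (- (l * c k)) \<le> T"
      using pk_exp_le_above_k_theta[OF k True _ \<open>0 \<le> theta\<close>] by (simp add: T_def)
    moreover have "pk gam n d k * (1 / (1 + exp (l * c k))) \<le> pk gam n d k * exp (- (l * c k))"
      using pk_pos[OF k] logistic_le_exp_neg by (intro mult_left_mono) auto
    ultimately show ?thesis using T_le by linarith
  next
    case False
    have "pk gam n d k * (1 / (1 + exp (l * c k))) \<le> pk gam n d k"
      using pk_pos[OF k] logistic_le_1 by (intro mult_left_le) auto
    also have "\<dots> \<le> A / alpha * T"
      using pk_le_below_k_theta[OF k] False by (simp add: T_def)
    finally show ?thesis using AT_le by linarith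
  qed
  then show ?thesis by (simp add: l_def T_def)
qed

lemma sum_Qstar_pairs_le:
  assumes "0 \<le> theta" and "0 < B" and "B \<le> B_minus gam alpha theta n d c"
  shows "(\<Sum>e\<in>pairs n. Qstar gam n d c B e)
     \<le> edge_constant gam alpha A * real n * ln (real n) powr (theta + 1)"
proof -
  define T where "T = ln (real n) powr theta"
  define K where "K = Kmax gam n"
  have "T \<ge> 0" by (simp add: T_def)
  have "1 + A / alpha \<ge> 0" using A_gt_1 alpha_pos by simp
  have "(\<Sum>e\<in>pairs n. Qstar gam n d c B e)
      \<le> 2 * real n * (\<Sum>k=1..K. pk gam n d k * (1 / (1 + exp (lam_of gam n d c B * c k))))"
    using sum_Qstar_pairs_le_scale_sum by (simp add: K_def)
  also have "\<dots> \<le> 2 * real n * (real K * ((1 + A / alpha) * T))"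
    using sum_bounded_above[of "{1..K}" _ "(1 + A / alpha) * T"] pk_logistic_le[OF assms]
    by (intro mult_left_mono) (auto simp: K_def T_def)
  also have "\<dots> \<le> 2 * real n * ((2 * ln (real n) / ln gam) * ((1 + A / alpha) * T))"
    using Kmax_le[OF gam_gt_1 gam_le_n] \<open>T \<ge> 0\<close> \<open>1 + A / alpha \<ge> 0\<close>
    by (intro mult_left_mono mult_right_mono) (auto simp: K_def)
  also have "\<dots> = edge_constant gam alpha A * real n * (ln (real n) * T)"
    by (simp add: edge_constant_def field_simps)
  also have "ln (real n) * T = ln (real n) powr (theta + 1)"
    using ln_n_ge_1 by (simp add: T_def powr_add)
  finally show ?thesis .
qed

lemma edge_constant_pos: "edge_constant gam alpha A > 0"
  using A_gt_1 alpha_pos gam_gt_1 by (simp add: edge_constant_def add_pos_nonneg)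

lemma prob_num_edges_le:
  assumes "0 \<le> theta" and "0 < B" and "B \<le> B_minus gam alpha theta n d c"
  defines "C \<equiv> edge_constant gam alpha A"
  shows "1 - exp (- 2 * C\<^sup>2 * ln (real n) ^ 2)
    \<le> measure_pmf.prob (random_graph n (Qstar gam n d c B))
        {X. real (num_edges n X) \<le> 2 * C * real n * ln (real n) powr (theta + 1)}"
proof -
  define L where "L = ln (real n) powr (theta + 1)"
  define b where "b = C * real n * L"
  have "ln (real n) \<le> L"
    using ln_n_ge_1 \<open>0 \<le> theta\<close> powr_mono[of 1 "theta + 1" "ln (real n)"] by (simp add: L_def)
  then have "C\<^sup>2 * ln (real n) ^ 2 \<le> C\<^sup>2 * L\<^sup>2"
    using ln_n_ge_1 by (intro mult_left_mono power_mono) auto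
  also have "\<dots> = b\<^sup>2 / (real n * real n)"
    using n_ge_3 by (simp add: b_def field_simps power2_eq_square)
  finally have "1 - exp (- 2 * C\<^sup>2 * ln (real n) ^ 2) \<le> 1 - exp (- 2 * b\<^sup>2 / (real n * real n))"
    by simp
  also have "\<dots> \<le> measure_pmf.prob (random_graph n (Qstar gam n d c B))
      {X. real (num_edges n X) \<le> (\<Sum>e\<in>pairs n. Qstar gam n d c B e) + b}"
    using edge_constant_pos ln_n_ge_1 \<open>ln (real n) \<le> L\<close> n_ge_3
    by (intro random_graph_num_edges_le Qstar_bounds) (auto simp: b_def C_def)
  also have "\<dots> \<le> measure_pmf.prob (random_graph n (Qstar gam n d c B))
      {X. real (num_edges n X) \<le> 2 * C * real n * ln (real n) powr (theta + 1)}"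
    using sum_Qstar_pairs_le[OF assms(1-3)]
    by (intro measure_pmf.finite_measure_mono) (auto simp: b_def L_def C_def)
  finally show ?thesis .
qed

end

theorem proposition3:
  fixes gam alpha A phi lam theta :: real
    and d :: "nat \<Rightarrow> nat \<Rightarrow> nat \<Rightarrow> real"
    and c :: "nat \<Rightarrow> nat \<Rightarrow> real"
    and B :: "nat \<Rightarrow> real"
  assumes geom: "eventually (\<lambda>n. coherent_cost_geometry gam alpha A phi lam n (d n) (c n)) sequentially"
    and theta: "theta > 0"
    and budget: "eventually (\<lambda>n. 0 < B n \<and> B n \<le> B_minus gam alpha theta n (d n) (c n)) sequentially"
  shows "\<exists>C. (\<lambda>n. measure_pmf.prob (random_graph n (Qstar gam n (d n) (c n) (B n)))
               {X. real (num_edges n X) \<le> C * real n * ln (real n) powr (theta + 1)})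
             \<longlonglongrightarrow> 1"
proof -
  define C where "C = edge_constant gam alpha A"
  define Pr where "Pr = (\<lambda>n. measure_pmf.prob (random_graph n (Qstar gam n (d n) (c n) (B n)))
               {X. real (num_edges n X) \<le> 2 * C * real n * ln (real n) powr (theta + 1)})"
  have "eventually (\<lambda>n. gam \<le> real n) sequentially" by real_asymp
  with geom budget eventually_ge_at_top[of 3]
  have large: "eventually (\<lambda>n. large_cost_geometry gam alpha A phi lam n (d n) (c n)
      \<and> 0 < B n \<and> B n \<le> B_minus gam alpha theta n (d n) (c n)) sequentially"
    by eventually_elim (simp add: large_cost_geometry_def)
  then obtain n where "large_cost_geometry gam alpha A phi lam n (d n) (c n)"
    using eventually_happens'[OF sequentially_bot large] by blast
  then have "C > 0" unfolding C_def by (rule large_cost_geometry.edge_constant_pos)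
  then have lim: "(\<lambda>n. 1 - exp (- 2 * C\<^sup>2 * ln (real n) ^ 2)) \<longlonglongrightarrow> 1" by real_asymp
  from large have lower: "eventually (\<lambda>n. 1 - exp (- 2 * C\<^sup>2 * ln (real n) ^ 2) \<le> Pr n) sequentially"
    unfolding Pr_def C_def
  proof eventually_elim
    case (elim n)
    then show ?case
      using large_cost_geometry.prob_num_edges_le[of gam alpha A phi lam n "d n" "c n" theta "B n"]
        theta by simp
  qed
  have upper: "eventually (\<lambda>n. Pr n \<le> 1) sequentially"
    by (simp add: Pr_def measure_pmf.prob_le_1)
  have "Pr \<longlonglongrightarrow> 1" by (rule tendsto_sandwich[OF lower upper lim tendsto_const])
  then show ?thesis unfolding Pr_def by blast
qed

end
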